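(* Let $m\geq 2$ be an integer and let $\delta(m)=\lceil\log_2(m/3)\rceil$. (i) If $y$ and $v$ are finite binary words such that $yvy$ is a factor of $\mathbf t$ and $|y|=m$, then $2^{\delta(m)}$ divides $|yv|$. (ii) There exist finite binary words $y,v$ such that $yvy$ is a factor of $\mathbf t$, $|y|=m$, and $2^{\delta(m)+1}$ does not divide $|yv|$.
   Context: The Thue–Morse word is the infinite binary word $\mathbf t=\mathbf t_1\mathbf t_2\mathbf t_3\cdots$ where $\mathbf t_i\in\{0,1\}$ has the same parity as the number of $1$'s in the binary expansion of $i-1$ (so $\mathbf t=0110100110010110\cdots$). A factor of $\mathbf t$ is a finite word of the form $\mathbf t_\alpha\mathbf t_{\alpha+1}\cdots\mathbf t_\beta$ (or the empty word). $|w|$ denotes the length of a word $w$; $v$ may be empty. *)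

theory Defs
  imports Complex_Main
begin

fun bitcount :: "nat \<Rightarrow> nat" where
  "bitcount n = (if n = 0 then 0 else n mod 2 + bitcount (n div 2))"

(* Thue-Morse word, 0-indexed: tm n = t_(n+1) = parity of bitcount n *)
definition tm :: "nat \<Rightarrow> nat" where
  "tm n = bitcount n mod 2"

(* w is a factor of t: w = t_(a+1) ... t_(a+|w|) for some a (includes empty word) *)
definition tm_factor :: "nat list \<Rightarrow> bool" where
  "tm_factor w \<longleftrightarrow> (\<exists>a. w = map tm [a..<a + length w])"

definition binary_word :: "nat list \<Rightarrow> bool" where
  "binary_word w \<longleftrightarrow> set w \<subseteq> {0, 1}"

(* delta(m) = ceiling(log_2(m/3)); nonnegative for m >= 2 *)
definition delta :: "nat \<Rightarrow> int" where
  "delta m = \<lceil>log 2 (real m / 3)\<rceil>"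

end

theory Submission
  imports Defs
begin

text \<open>
  The Thue--Morse word is the fixed point of the morphism \<open>0 \<mapsto> 01, 1 \<mapsto> 10\<close>, and it
  contains no three equal consecutive letters.  Hence a factor of length at least 4 occurs
  only at positions of one parity, and de-substituting halves the factor: by induction a
  factor of length greater than \<open>3\<cdot>2\<^sup>k\<close> occurs only at positions in one residue class
  mod \<open>2\<^sup>k\<^sup>+\<^sup>1\<close>.  Two occurrences of \<open>y\<close> at distance \<open>|yv|\<close> therefore give (i), since
  \<open>\<delta>(m)\<close> is the least \<open>k\<close> with \<open>m \<le> 3\<cdot>2\<^sup>k\<close>.  For (ii), \<open>t\<^sub>3t\<^sub>4t\<^sub>5 = t\<^sub>1\<^sub>2t\<^sub>1\<^sub>3t\<^sub>1\<^sub>4 = 101\<close>;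
  applying the \<open>\<delta>(m)\<close>-th power of the morphism yields two occurrences of a factor of
  length \<open>3\<cdot>2\<^sup>\<delta>\<^sup>(\<^sup>m\<^sup>)\<close> at distance \<open>9\<cdot>2\<^sup>\<delta>\<^sup>(\<^sup>m\<^sup>)\<close>.
\<close>

declare bitcount.simps[simp del]

lemma bitcount_0 [simp]: "bitcount 0 = 0"
  by (simp add: bitcount.simps)

lemma bitcount_double_plus: "r < 2 \<Longrightarrow> bitcount (2 * n + r) = bitcount n + r"
  by (subst bitcount.simps) auto

lemma bitcount_pow2_mult_plus:
  "i < 2 ^ k \<Longrightarrow> bitcount (2 ^ k * n + i) = bitcount n + bitcount i"
proof (induction k arbitrary: i)
  case 0
  then show ?case by simp
next
  case (Suc k)
  have "bitcount (2 ^ Suc k * n + i) = bitcount (2 * (2 ^ k * n + i div 2) + i mod 2)"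
    by (simp add: algebra_simps)
  also have "\<dots> = bitcount (2 ^ k * n + i div 2) + i mod 2"
    by (rule bitcount_double_plus) simp
  also have "\<dots> = bitcount n + (bitcount (i div 2) + i mod 2)"
    using Suc by simp
  also have "bitcount (i div 2) + i mod 2 = bitcount i"
    using bitcount_double_plus[of "i mod 2" "i div 2"] by simp
  finally show ?case .
qed

lemma tm_cases: "tm n = 0 \<or> tm n = 1"
  unfolding tm_def by presburger

lemma binary_word_map_tm: "binary_word (map tm xs)"
  unfolding binary_word_def by (auto simp: tm_def)

lemma tm_double [simp]: "tm (2 * n) = tm n"
  using bitcount_double_plus[of 0 n] by (simp add: tm_def)

lemma tm_Suc_double [simp]: "tm (Suc (2 * n)) = 1 - tm n"
  using bitcount_double_plus[of 1 n] by (simp add: tm_def mod_Suc)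

lemma tm_pow2_mult_plus: "i < 2 ^ k \<Longrightarrow> tm (2 ^ k * n + i) = (tm n + tm i) mod 2"
  by (simp add: tm_def bitcount_pow2_mult_plus mod_add_eq)

lemma tm_double_plus_neq: "tm (2 * n + 1) \<noteq> tm (2 * n)"
  using tm_cases[of n] by auto

lemma tm_no_three_equal: "tm n = tm (n + 1) \<Longrightarrow> tm (n + 1) = tm (n + 2) \<Longrightarrow> False"
proof (cases "even n")
  case True
  then obtain e where "n = 2 * e" ..
  then show "tm n = tm (n + 1) \<Longrightarrow> False"
    using tm_double_plus_neq[of e] by simp
next
  case False
  then obtain e where "n = 2 * e + 1" by (rule oddE)
  then show "tm (n + 1) = tm (n + 2) \<Longrightarrow> False"
    using tm_double_plus_neq[of "e + 1"] by (simp add: algebra_simps)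
qed

lemma tm_odd_pair_neq_iff: "tm (2 * d + 1) \<noteq> tm (2 * d + 2) \<longleftrightarrow> tm d = tm (d + 1)"
proof -
  have "tm (2 * d + 2) = tm (d + 1)"
    using tm_double[of "d + 1"] by (simp add: algebra_simps)
  then show ?thesis
    using tm_cases[of d] tm_cases[of "d + 1"] by auto
qed

lemma tm_agree_even_odd_False:
  assumes "even a" "odd b" and agree: "\<forall>i<4. tm (a + i) = tm (b + i)"
  shows False
proof -
  obtain c where a: "a = 2 * c" using \<open>even a\<close> ..
  obtain d where b: "b = 2 * d + 1" using \<open>odd b\<close> by (rule oddE)
  have agree_at: "tm (a + i) = tm (b + i)" if "i < 4" for i
    using agree that by blast
  have "tm a \<noteq> tm (a + 1)" "tm (a + 2) \<noteq> tm (a + 3)"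
  proof -
    have "a + 2 = 2 * (c + 1)" "a + 3 = 2 * (c + 1) + 1"
      by (simp_all add: a)
    then show "tm a \<noteq> tm (a + 1)" "tm (a + 2) \<noteq> tm (a + 3)"
      using tm_double_plus_neq[of c] tm_double_plus_neq[of "c + 1"] a by metis+
  qed
  then have "tm b \<noteq> tm (b + 1)" "tm (b + 2) \<noteq> tm (b + 3)"
    using agree_at[of 0] agree_at[of 1] agree_at[of 2] agree_at[of 3] by simp_all
  moreover have "b + 1 = 2 * d + 2" "b + 2 = 2 * (d + 1) + 1" "b + 3 = 2 * (d + 1) + 2"
    by (simp_all add: b)
  ultimately have "tm d = tm (d + 1)" "tm (d + 1) = tm (d + 2)"
    using tm_odd_pair_neq_iff[of d] tm_odd_pair_neq_iff[of "d + 1"] b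
    by (metis add.assoc one_add_one)+
  then show False
    by (rule tm_no_three_equal)
qed

lemma tm_agree_mod_2:
  assumes "4 \<le> n" "\<forall>i<n. tm (a + i) = tm (b + i)"
  shows "a mod 2 = b mod 2"
proof (rule ccontr)
  assume "a mod 2 \<noteq> b mod 2"
  then have "even a \<and> odd b \<or> even b \<and> odd a"
    by (auto simp: even_iff_mod_2_eq_zero)
  then show False
    using assms tm_agree_even_odd_False[of a b] tm_agree_even_odd_False[of b a] by force
qed

lemma tm_agree_div_2:
  assumes "a mod 2 = b mod 2" "\<forall>i<n. tm (a + i) = tm (b + i)"
  shows "\<forall>j<(n + 1) div 2. tm (a div 2 + j) = tm (b div 2 + j)"
proof (intro allI impI)
  fix j
  assume "j < (n + 1) div 2"
  then have "tm (a + 2 * j) = tm (b + 2 * j)"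
    using assms(2) by simp
  moreover have "a + 2 * j = 2 ^ 1 * (a div 2 + j) + a mod 2"
    by simp
  moreover have "b + 2 * j = 2 ^ 1 * (b div 2 + j) + a mod 2"
    using assms(1) by simp
  ultimately have "(tm (a div 2 + j) + tm (a mod 2)) mod 2 = (tm (b div 2 + j) + tm (a mod 2)) mod 2"
    using tm_pow2_mult_plus[of "a mod 2" 1] by (metis mod_less_divisor pos2 power_one_right)
  then show "tm (a div 2 + j) = tm (b div 2 + j)"
    using tm_cases[of "a div 2 + j"] tm_cases[of "b div 2 + j"] tm_cases[of "a mod 2"] by auto
qed

lemma tm_agree_mod_pow2:
  assumes "3 * 2 ^ k < n" "\<forall>i<n. tm (a + i) = tm (b + i)"
  shows "a mod 2 ^ (k + 1) = b mod 2 ^ (k + 1)"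
  using assms
proof (induction k arbitrary: a b n)
  case 0
  then show ?case
    using tm_agree_mod_2[of n a b] by simp
next
  case (Suc k)
  have "(6::nat) \<le> 3 * 2 ^ Suc k"
    by simp
  then have "4 \<le> n"
    using Suc.prems(1) by linarith
  then have par: "a mod 2 = b mod 2"
    using tm_agree_mod_2 Suc.prems(2) by blast
  moreover have "a div 2 mod 2 ^ (k + 1) = b div 2 mod 2 ^ (k + 1)"
    using Suc.IH[OF _ tm_agree_div_2[OF par Suc.prems(2)]] Suc.prems(1) by simp
  moreover have "(2::nat) ^ (Suc k + 1) = 2 * 2 ^ (k + 1)"
    by simp
  ultimately show ?case
    using mod_mult2_eq[of a 2 "2 ^ (k + 1)"] mod_mult2_eq[of b 2 "2 ^ (k + 1)"] by simp
qed

lemma tm_repetition_pow2_dvd: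
  assumes "3 * 2 ^ k < m" "\<forall>i<m. tm (a + i) = tm (a + p + i)"
  shows "2 ^ (k + 1) dvd p"
proof -
  have "a mod 2 ^ (k + 1) = (a + p) mod 2 ^ (k + 1)"
    using tm_agree_mod_pow2 assms by blast
  then show ?thesis
    by (metis add_diff_cancel_left' le_add1 mod_eq_dvd_iff_nat)
qed

lemma tm_repetition_9_pow2:
  assumes "i < 3 * 2 ^ k"
  shows "tm (2 ^ k * 2 + i) = tm (2 ^ k * 2 + 9 * 2 ^ k + i)"
proof -
  define q r where "q = i div 2 ^ k" and "r = i mod 2 ^ k"
  have "r < 2 ^ k"
    by (simp add: r_def)
  have "q < 3"
    using assms by (simp add: q_def less_mult_imp_div_less)
  have "map tm [2..<5] = map tm [11..<14]"
    by (simp add: upt_rec tm_def bitcount.simps)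
  moreover have "tm (2 + q) = map tm [2..<5] ! q" "tm (11 + q) = map tm [11..<14] ! q"
    using \<open>q < 3\<close> by (subst nth_map_upt; simp)+
  ultimately have "tm (2 + q) = tm (11 + q)"
    by simp
  moreover have "2 ^ k * 2 + i = 2 ^ k * (2 + q) + r"
    and "2 ^ k * 2 + 9 * 2 ^ k + i = 2 ^ k * (11 + q) + r"
    by (simp_all add: q_def r_def algebra_simps)
  ultimately show ?thesis
    using tm_pow2_mult_plus[OF \<open>r < 2 ^ k\<close>] by metis
qed

lemma tm_factor_repetition_iff:
  assumes "m \<le> p"
  shows "(\<exists>y v. binary_word y \<and> binary_word v \<and> tm_factor (y @ v @ y) \<and> length y = m
            \<and> length (y @ v) = p)
    \<longleftrightarrow> (\<exists>a. \<forall>i<m. tm (a + i) = tm (a + p + i))"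
proof
  assume "\<exists>y v. binary_word y \<and> binary_word v \<and> tm_factor (y @ v @ y) \<and> length y = m
            \<and> length (y @ v) = p"
  then obtain y v a where len: "length y = m" "length (y @ v) = p"
    and a: "y @ v @ y = map tm [a..<a + length (y @ v @ y)]"
    unfolding tm_factor_def by blast
  have "tm (a + i) = tm (a + p + i)" if "i < m" for i
  proof -
    have "tm (a + i) = (y @ v @ y) ! i"
      using that len by (subst a) simp
    also have "\<dots> = y ! i"
      using that len by (simp add: nth_append)
    also have "\<dots> = (y @ v @ y) ! (p + i)"
      by (metis append_assoc len(2) nth_append_length_plus)
    also have "\<dots> = tm (a + p + i)"
      using that len by (subst a) (simp add: add.assoc)
    finally show ?thesis .
  qed
  then show "\<exists>a. \<forall>i<m. tm (a + i) = tm (a + p + i)"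
    by blast
next
  assume "\<exists>a. \<forall>i<m. tm (a + i) = tm (a + p + i)"
  then obtain a where per: "\<forall>i<m. tm (a + i) = tm (a + p + i)" ..
  define y v where "y = map tm [a..<a + m]" and "v = map tm [a + m..<a + p]"
  have len: "length y = m" "length (y @ v) = p"
    using assms by (simp_all add: y_def v_def)
  have "map tm [a + p..<a + p + m] = y"
    using per by (simp add: y_def list_eq_iff_nth_eq)
  moreover have "map tm [a..<a + p] = y @ v"
    using assms upt_add_eq_append[of a "a + m" "p - m"] by (simp add: y_def v_def)
  ultimately have "y @ v @ y = map tm [a..<a + p + m]"
    by (simp only: upt_add_eq_append[OF le_add1] map_append append_assoc)
  moreover have "length (y @ v @ y) = p + m"
    using len by simp
  ultimately have "tm_factor (y @ v @ y)"
    unfolding tm_factor_def by (metis add.assoc)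
  moreover have "binary_word y" "binary_word v"
    unfolding y_def v_def by (rule binary_word_map_tm)+
  ultimately show "\<exists>y v. binary_word y \<and> binary_word v \<and> tm_factor (y @ v @ y) \<and> length y = m
            \<and> length (y @ v) = p"
    using len by blast
qed

lemma delta_le_iff:
  assumes "0 < m"
  shows "nat (delta m) \<le> k \<longleftrightarrow> m \<le> 3 * 2 ^ k"
proof -
  have "nat (delta m) \<le> k \<longleftrightarrow> log 2 (real m / 3) \<le> real k"
    unfolding delta_def by (simp add: nat_le_iff ceiling_le_iff)
  also have "\<dots> \<longleftrightarrow> real m / 3 \<le> 2 powr real k"
    using assms by (simp add: log_le_iff)
  also have "\<dots> \<longleftrightarrow> real m \<le> real (3 * 2 ^ k)"
    by (simp add: powr_realpow mult.commute)
  also have "\<dots> \<longleftrightarrow> m \<le> 3 * 2 ^ k"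
    by (rule of_nat_le_iff)
  finally show ?thesis .
qed

theorem proposition1:
  fixes m :: nat
  assumes "m \<ge> 2"
  shows "(\<forall>y v. binary_word y \<and> binary_word v \<and> tm_factor (y @ v @ y) \<and> length y = m
            \<longrightarrow> (2::int) ^ nat (delta m) dvd int (length (y @ v)))
       \<and> (\<exists>y v. binary_word y \<and> binary_word v \<and> tm_factor (y @ v @ y) \<and> length y = m
            \<and> \<not> (2::int) ^ (nat (delta m) + 1) dvd int (length (y @ v)))"
proof (intro conjI allI impI)
  fix y v
  assume "binary_word y \<and> binary_word v \<and> tm_factor (y @ v @ y) \<and> length y = m"
  then obtain a where per: "\<forall>i<m. tm (a + i) = tm (a + length (y @ v) + i)"
    using tm_factor_repetition_iff[of m "length (y @ v)"] by auto
  show "(2::int) ^ nat (delta m) dvd int (length (y @ v))"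
  proof (cases "nat (delta m)")
    case (Suc k)
    then have "3 * 2 ^ k < m"
      using delta_le_iff[of m k] assms by simp
    then have "2 ^ nat (delta m) dvd length (y @ v)"
      using tm_repetition_pow2_dvd per Suc by fastforce
    then show ?thesis
      by (metis of_nat_dvd_iff of_nat_numeral of_nat_power)
  qed simp
next
  define K where "K = nat (delta m)"
  have "m \<le> 3 * 2 ^ K"
    using delta_le_iff[of m K] assms by (simp add: K_def)
  then have "\<forall>i<m. tm (2 ^ K * 2 + i) = tm (2 ^ K * 2 + 9 * 2 ^ K + i)"
    using tm_repetition_9_pow2 by auto
  then have "\<exists>a. \<forall>i<m. tm (a + i) = tm (a + 9 * 2 ^ K + i)"
    by blast
  moreover have "m \<le> 9 * 2 ^ K"
    using \<open>m \<le> 3 * 2 ^ K\<close> by simp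
  ultimately obtain y v where "binary_word y" "binary_word v" "tm_factor (y @ v @ y)"
    and "length y = m" "length (y @ v) = 9 * 2 ^ K"
    using tm_factor_repetition_iff by blast
  moreover have "\<not> (2::int) ^ (K + 1) dvd int (9 * 2 ^ K)"
    by simp
  ultimately show "\<exists>y v. binary_word y \<and> binary_word v \<and> tm_factor (y @ v @ y) \<and> length y = m
            \<and> \<not> (2::int) ^ (nat (delta m) + 1) dvd int (length (y @ v))"
    unfolding K_def[symmetric] by metis
qed

end
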